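(* There exists a dataset of size $n$ for which the disagreement coefficient of the class of binary decision trees (of height at most $d\ge2$, over $\mathrm{dim}\ge2$ input dimensions) is $\Omega(n)$, even if nodes are restricted to test dimensions that are unique along every root-to-leaf path.
   Context: A decision tree routes a point $x\in\mathbb{R}^{\mathrm{dim}}$ from the root; each internal node compares one coordinate $x_a$ with a threshold, each leaf carries a label in $\{0,1\}$. For a dataset $S$ of $n$ points and class $H$: $D_S(h,h')=\frac1n\sum_{x\in S}\mathbb{I}(h(x)\ne h'(x))$, $B_H(h,r)=\{h'\in H:D_S(h,h')\le r\}$, $\mathrm{DIS}_S(V)=\{x\in S:\exists h_1,h_2\in V,h_1(x)\ne h_2(x)\}$, $\theta_h=\sup_{r>0}\frac{|\mathrm{DIS}_S(B_H(h,r))|}{rn}$, $\theta=\sup_{h\in H}\theta_h$. *)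

theory Defs
  imports "HOL-Analysis.Analysis" "HOL-Library.Extended_Real"
begin

text \<open>Points of R^dim are represented as functions nat => real; a point of R^ndim
  is one whose coordinates at indices >= dim vanish. Coordinates are x 0, ..., x (dim-1).\<close>

definition points :: "nat \<Rightarrow> (nat \<Rightarrow> real) set" where
  "points ndim = {x. \<forall>i\<ge>ndim. x i = 0}"

datatype dtree = Leaf bool | Node nat real dtree dtree

fun eval_tree :: "dtree \<Rightarrow> (nat \<Rightarrow> real) \<Rightarrow> bool" where
  "eval_tree (Leaf b) x = b"
| "eval_tree (Node a t l r) x = (if x a \<le> t then eval_tree l x else eval_tree r x)"

fun height :: "dtree \<Rightarrow> nat" where
  "height (Leaf b) = 0"
| "height (Node a t l r) = Suc (max (height l) (height r))"

fun tests_below :: "nat \<Rightarrow> dtree \<Rightarrow> bool" where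
  "tests_below ndim (Leaf b) = True"
| "tests_below ndim (Node a t l r) = (a < ndim \<and> tests_below ndim l \<and> tests_below ndim r)"

fun unique_tests_aux :: "nat set \<Rightarrow> dtree \<Rightarrow> bool" where
  "unique_tests_aux A (Leaf b) = True"
| "unique_tests_aux A (Node a t l r) =
     (a \<notin> A \<and> unique_tests_aux (insert a A) l \<and> unique_tests_aux (insert a A) r)"

definition unique_tests :: "dtree \<Rightarrow> bool" where
  "unique_tests T = unique_tests_aux {} T"

definition tree_class :: "nat \<Rightarrow> nat \<Rightarrow> ((nat \<Rightarrow> real) \<Rightarrow> bool) set" where
  "tree_class d ndim = {eval_tree T | T. height T \<le> d \<and> tests_below ndim T \<and> unique_tests T}"

definition D_S :: "(nat \<Rightarrow> real) set \<Rightarrow> ((nat \<Rightarrow> real) \<Rightarrow> bool) \<Rightarrow> ((nat \<Rightarrow> real) \<Rightarrow> bool) \<Rightarrow> real" where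
  "D_S S h h' = real (card {x\<in>S. h x \<noteq> h' x}) / real (card S)"

definition ball_H :: "(nat \<Rightarrow> real) set \<Rightarrow> ((nat \<Rightarrow> real) \<Rightarrow> bool) set \<Rightarrow> ((nat \<Rightarrow> real) \<Rightarrow> bool) \<Rightarrow> real
    \<Rightarrow> ((nat \<Rightarrow> real) \<Rightarrow> bool) set" where
  "ball_H S H h r = {h'\<in>H. D_S S h h' \<le> r}"

definition DIS :: "(nat \<Rightarrow> real) set \<Rightarrow> ((nat \<Rightarrow> real) \<Rightarrow> bool) set \<Rightarrow> (nat \<Rightarrow> real) set" where
  "DIS S V = {x\<in>S. \<exists>h1\<in>V. \<exists>h2\<in>V. h1 x \<noteq> h2 x}"

definition theta_h :: "(nat \<Rightarrow> real) set \<Rightarrow> ((nat \<Rightarrow> real) \<Rightarrow> bool) set \<Rightarrow> ((nat \<Rightarrow> real) \<Rightarrow> bool) \<Rightarrow> ereal" where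
  "theta_h S H h = (SUP r\<in>{r::real. r > 0}.
       ereal (real (card (DIS S (ball_H S H h r))) / (r * real (card S))))"

definition disagreement_coeff :: "(nat \<Rightarrow> real) set \<Rightarrow> ((nat \<Rightarrow> real) \<Rightarrow> bool) set \<Rightarrow> ereal" where
  "disagreement_coeff S H = (SUP h\<in>H. theta_h S H h)"

end

theory Submission
  imports Defs
begin

text \<open>If every point of S can be singled out, i.e. some hypothesis disagrees with a fixed h
  exactly at that point, then all these hypotheses lie in the ball of radius 1/n around h,
  so its disagreement region is all of S and the ratio in the disagreement coefficient is
  n / ((1/n) n) = n. Height-2 trees single out points of the antidiagonal
  {(i, -i)}: the point (j, -j) satisfies x 0 \<le> i and x 1 \<le> -i iff j = i.\<close>

lemma DIS_ball_eq_if_isolating: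
  assumes "h \<in> H"
    and isolating: "\<forall>x\<in>S. \<exists>g\<in>H. {y\<in>S. h y \<noteq> g y} = {x}"
  shows "DIS S (ball_H S H h (1 / real (card S))) = S"
proof
  show "DIS S (ball_H S H h (1 / real (card S))) \<subseteq> S"
    unfolding DIS_def by auto
next
  have h_in_ball: "h \<in> ball_H S H h (1 / real (card S))"
    using \<open>h \<in> H\<close> by (simp add: ball_H_def D_S_def)
  show "S \<subseteq> DIS S (ball_H S H h (1 / real (card S)))"
  proof
    fix x assume "x \<in> S"
    then obtain g where "g \<in> H" and g: "{y\<in>S. h y \<noteq> g y} = {x}"
      using isolating by blast
    then have "g \<in> ball_H S H h (1 / real (card S))"
      by (simp add: ball_H_def D_S_def)
    moreover have "h x \<noteq> g x"
      using g by blast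
    ultimately show "x \<in> DIS S (ball_H S H h (1 / real (card S)))"
      using \<open>x \<in> S\<close> h_in_ball unfolding DIS_def by blast
  qed
qed

lemma disagreement_coeff_ge_card_if_isolating:
  assumes "finite S" "S \<noteq> {}" "h \<in> H"
    and isolating: "\<forall>x\<in>S. \<exists>g\<in>H. {y\<in>S. h y \<noteq> g y} = {x}"
  shows "ereal (real (card S)) \<le> disagreement_coeff S H"
proof -
  let ?r = "1 / real (card S)"
  have card_pos: "real (card S) > 0"
    using assms(1,2) by (simp add: card_gt_0_iff)
  have "ereal (real (card S)) = ereal (real (card (DIS S (ball_H S H h ?r))) / (?r * real (card S)))"
    using card_pos by (simp add: DIS_ball_eq_if_isolating[OF \<open>h \<in> H\<close> isolating])
  also have "\<dots> \<le> theta_h S H h"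
    unfolding theta_h_def by (rule SUP_upper) (use card_pos in simp)
  also have "\<dots> \<le> disagreement_coeff S H"
    unfolding disagreement_coeff_def by (rule SUP_upper) (fact \<open>h \<in> H\<close>)
  finally show ?thesis .
qed

definition antidiag_point :: "nat \<Rightarrow> nat \<Rightarrow> real" where
  "antidiag_point i = (\<lambda>k. if k = 0 then real i else if k = 1 then - real i else 0)"

definition isolating_tree :: "nat \<Rightarrow> dtree" where
  "isolating_tree i = Node 0 (real i) (Node 1 (- real i) (Leaf True) (Leaf False)) (Leaf False)"

lemma eval_isolating_tree_antidiag_point:
  "eval_tree (isolating_tree i) (antidiag_point j) = (i = j)"
  by (auto simp: isolating_tree_def antidiag_point_def)

lemma inj_antidiag_point: "inj antidiag_point"
  by (rule injI) (metis antidiag_point_def of_nat_eq_iff)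

lemma antidiag_point_in_points: "2 \<le> ndim \<Longrightarrow> antidiag_point i \<in> points ndim"
  by (simp add: points_def antidiag_point_def)

lemma isolating_tree_in_tree_class:
  "2 \<le> d \<Longrightarrow> 2 \<le> ndim \<Longrightarrow> eval_tree (isolating_tree i) \<in> tree_class d ndim"
  unfolding tree_class_def
  by (rule CollectI, rule exI[of _ "isolating_tree i"])
     (simp add: isolating_tree_def unique_tests_def)

lemma Leaf_in_tree_class: "eval_tree (Leaf b) \<in> tree_class d ndim"
  unfolding tree_class_def by (auto simp: unique_tests_def)

lemma antidiag_points_isolated_by_trees:
  assumes "2 \<le> d" "2 \<le> ndim"
  shows "\<forall>x\<in>antidiag_point ` A. \<exists>g\<in>tree_class d ndim.
           {y\<in>antidiag_point ` A. eval_tree (Leaf False) y \<noteq> g y} = {x}"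
proof
  fix x assume "x \<in> antidiag_point ` A"
  then obtain i where x: "x = antidiag_point i"
    by blast
  have "{y\<in>antidiag_point ` A. eval_tree (Leaf False) y \<noteq> eval_tree (isolating_tree i) y} = {x}"
    using \<open>x \<in> antidiag_point ` A\<close>
    by (auto simp: x eval_isolating_tree_antidiag_point inj_eq[OF inj_antidiag_point])
  then show "\<exists>g\<in>tree_class d ndim.
               {y\<in>antidiag_point ` A. eval_tree (Leaf False) y \<noteq> g y} = {x}"
    using isolating_tree_in_tree_class[OF assms] by blast
qed

theorem theorem4:
  shows "\<exists>c::real. c > 0 \<and> (\<exists>N::nat. \<forall>d ndim n. 2 \<le> d \<longrightarrow> 2 \<le> ndim \<longrightarrow> N \<le> n \<longrightarrow>
     (\<exists>S. S \<subseteq> points ndim \<and> finite S \<and> card S = n \<and>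
          disagreement_coeff S (tree_class d ndim) \<ge> ereal (c * real n)))"
proof (intro exI[of _ 1] conjI exI[of _ 1] allI impI)
  fix d ndim n :: nat
  assume d: "2 \<le> d" and ndim: "2 \<le> ndim" and "1 \<le> n"
  define S where "S = antidiag_point ` {..<n}"
  have card_S: "card S = n"
    unfolding S_def by (simp add: card_image inj_on_subset[OF inj_antidiag_point])
  have "finite S" and "S \<noteq> {}"
    using card_S \<open>1 \<le> n\<close> by (auto simp: S_def)
  have "ereal (real n) \<le> disagreement_coeff S (tree_class d ndim)"
    using disagreement_coeff_ge_card_if_isolating[OF \<open>finite S\<close> \<open>S \<noteq> {}\<close> Leaf_in_tree_class
        antidiag_points_isolated_by_trees[OF d ndim, of "{..<n}", folded S_def]] card_S
    by simp
  moreover have "S \<subseteq> points ndim"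
    using antidiag_point_in_points[OF ndim] by (auto simp: S_def)
  ultimately show "\<exists>S. S \<subseteq> points ndim \<and> finite S \<and> card S = n \<and>
          ereal (1 * real n) \<le> disagreement_coeff S (tree_class d ndim)"
    using card_S \<open>finite S\<close> by auto
qed simp

end
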